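(* Let $\alpha,\beta,\gamma,\lambda,x$ be non-negative integers with $(\alpha,\beta,\gamma,\lambda,x)\neq(0,0,0,0,0)$. Then for every integer $n\ge0$, $$T_{n+1}^{\lambda,x}(\alpha,\beta,\gamma)=\gamma\,T_n^{\lambda,x}(\alpha,\beta,\gamma-\alpha)+x\lambda\beta\sum_{s=0}^{n}\binom{n}{s}(\gamma|\alpha)_s\,T_{n-s}^{\lambda+1,x}(\alpha,\beta,\beta-\alpha).$$
   Context: For complex numbers $c,\alpha$ and an integer $n\ge 0$ let $(c|\alpha)_n=\prod_{i=0}^{n-1}(c-i\alpha)$, with $(c|\alpha)_0=1$. Let $E_{\alpha,c}(t)=\sum_{n\ge 0}(c|\alpha)_n\,t^n/n!$, viewed as a formal power series in $t$. It equals $(1+\alpha t)^{c/\alpha}$ if $\alpha\neq0$ and $e^{ct}$ if $\alpha=0$. For complex $\alpha,\beta,\gamma,x$ and a non-negative integer $\lambda$, the numbers $T_n^{\lambda,x}(\alpha,\beta,\gamma)$, $n\ge0$, are defined by the formal power series identity $$\sum_{n\ge0}T_n^{\lambda,x}(\alpha,\beta,\gamma)\frac{t^n}{n!}=E_{\alpha,\gamma}(t)\,\bigl(1-x(E_{\alpha,\beta}(t)-1)\bigr)^{-\lambda}.$$ The third argument may be any complex number. *)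

theory Defs
  imports "HOL-Computational_Algebra.Formal_Power_Series"
begin

definition gfall :: "complex \<Rightarrow> complex \<Rightarrow> nat \<Rightarrow> complex" where
  "gfall c a n = (\<Prod>i<n. c - of_nat i * a)"

definition E_fps :: "complex \<Rightarrow> complex \<Rightarrow> complex fps" where
  "E_fps a c = Abs_fps (\<lambda>n. gfall c a n / fact n)"

text \<open>The base series has constant coefficient 1, so inverse is the genuine inverse.\<close>
definition T :: "nat \<Rightarrow> complex \<Rightarrow> complex \<Rightarrow> complex \<Rightarrow> complex \<Rightarrow> nat \<Rightarrow> complex" where
  "T lam x a b g n = fact n * fps_nth
     (E_fps a g * inverse ((1 - fps_const x * (E_fps a b - 1)) ^ lam)) n"

end

theory Submission
  imports Defs
begin

unbundle fps_syntax

text \<open>Write D = 1 - x (E_{\<alpha>,\<beta>} - 1). Then E_{\<alpha>,c}' = c E_{\<alpha>,c-\<alpha>} and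
  (D^-\<lambda>)' = \<lambda> x \<beta> E_{\<alpha>,\<beta>-\<alpha>} D^-(\<lambda>+1), so by the product rule the derivative of the
  exponential generating function of T^\<lambda>(\<gamma>) is \<gamma> times that of T^\<lambda>(\<gamma>-\<alpha>) plus
  \<lambda> x \<beta> E_{\<alpha>,\<gamma>} times that of T^(\<lambda>+1)(\<beta>-\<alpha>). Comparing coefficients turns the
  last product into a binomial convolution. The recurrence therefore holds for arbitrary complex
  parameters.\<close>

lemma fact_Suc_mult_nth_eq_fps_deriv_nth:
  fixes f :: "'a::{comm_semiring_1,semiring_char_0} fps"
  shows "fact (Suc n) * f $ Suc n = fact n * fps_deriv f $ n"
  by (simp add: algebra_simps)

lemma fact_mult_fps_mult_nth:
  fixes f g :: "'a::{comm_semiring_1,semiring_char_0} fps"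
  shows "fact n * (f * g) $ n =
    (\<Sum>s=0..n. of_nat (n choose s) * (fact s * f $ s) * (fact (n - s) * g $ (n - s)))"
  unfolding fps_mult_nth sum_distrib_left
proof (rule sum.cong[OF refl])
  fix s assume "s \<in> {0..n}"
  then have "fact s * fact (n - s) * of_nat (n choose s) = (fact n :: 'a)"
    using binomial_fact_lemma[of s n] by (metis atLeastAtMost_iff of_nat_fact of_nat_mult)
  then show "fact n * (f $ s * g $ (n - s)) =
      of_nat (n choose s) * (fact s * f $ s) * (fact (n - s) * g $ (n - s))"
    by (metis (no_types, lifting) mult.assoc mult.left_commute)
qed

lemma fps_deriv_inverse_power:
  fixes a :: "'a::field fps"
  assumes "a $ 0 \<noteq> 0"
  shows "fps_deriv (inverse a ^ k) = - fps_const (of_nat k) * fps_deriv a * inverse a ^ Suc k"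
proof (cases k)
  case (Suc m)
  have "fps_deriv (inverse a ^ k) =
      fps_const (of_nat k) * (- fps_deriv a * inverse a ^ 2) * inverse a ^ m"
    unfolding fps_deriv_power fps_inverse_deriv[OF assms] by (simp add: Suc)
  moreover have "inverse a ^ 2 * inverse a ^ m = inverse a ^ Suc k"
    by (simp add: Suc power2_eq_square)
  ultimately show ?thesis
    by (metis (no_types) mult.assoc mult_minus_left mult_minus_right)
qed simp

lemma gfall_Suc: "gfall c a (Suc n) = c * gfall (c - a) a n"
  unfolding gfall_def prod.lessThan_Suc_shift by (simp add: algebra_simps del: prod.lessThan_Suc)

lemma E_fps_nth_0 [simp]: "E_fps a c $ 0 = 1"
  by (simp add: E_fps_def gfall_def)

lemma fact_mult_E_fps_nth: "fact n * E_fps a c $ n = gfall c a n"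
  by (simp add: E_fps_def)

lemma fps_deriv_E_fps: "fps_deriv (E_fps a c) = fps_const c * E_fps a (c - a)"
proof (rule fps_ext)
  fix n
  have "fact (Suc n) = (of_nat (Suc n) :: complex) * fact n" by simp
  then show "fps_deriv (E_fps a c) $ n = (fps_const c * E_fps a (c - a)) $ n"
    by (simp add: E_fps_def gfall_Suc field_simps del: fact_Suc of_nat_Suc)
qed

definition T_egf :: "nat \<Rightarrow> complex \<Rightarrow> complex \<Rightarrow> complex \<Rightarrow> complex \<Rightarrow> complex fps" where
  "T_egf lam x a b g = E_fps a g * inverse (1 - fps_const x * (E_fps a b - 1)) ^ lam"

lemma T_eq_fact_mult_T_egf_nth: "T lam x a b g n = fact n * T_egf lam x a b g $ n"
  by (simp add: T_def T_egf_def fps_inverse_power)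

lemma fps_deriv_T_egf:
  "fps_deriv (T_egf lam x a b g) = fps_const g * T_egf lam x a b (g - a)
     + fps_const (x * of_nat lam * b) * (E_fps a g * T_egf (Suc lam) x a b (b - a))"
proof -
  define D where "D = 1 - fps_const x * (E_fps a b - 1)"
  have "D $ 0 \<noteq> 0" by (simp add: D_def)
  moreover have "fps_deriv D = - fps_const (x * b) * E_fps a (b - a)"
    by (simp add: D_def fps_deriv_E_fps fps_const_mult[symmetric] del: fps_const_mult)
  ultimately have "fps_deriv (inverse D ^ lam)
      = fps_const (x * of_nat lam * b) * E_fps a (b - a) * inverse D ^ Suc lam"
    by (simp add: fps_deriv_inverse_power fps_const_neg[symmetric] mult_ac
        fps_const_mult[symmetric] del: fps_const_mult fps_const_neg)
  then show ?thesis
    unfolding T_egf_def D_def[symmetric]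
    by (simp add: fps_deriv_E_fps algebra_simps del: power_Suc)
qed

theorem T_Suc:
  "T lam x a b g (Suc n) = g * T lam x a b (g - a) n
    + x * of_nat lam * b *
      (\<Sum>s=0..n. of_nat (n choose s) * gfall g a s * T (Suc lam) x a b (b - a) (n - s))"
proof -
  have "T lam x a b g (Suc n) = fact n * fps_deriv (T_egf lam x a b g) $ n"
    by (simp only: T_eq_fact_mult_T_egf_nth fact_Suc_mult_nth_eq_fps_deriv_nth)
  also have "\<dots> = g * T lam x a b (g - a) n
      + x * of_nat lam * b * (fact n * (E_fps a g * T_egf (Suc lam) x a b (b - a)) $ n)"
    unfolding fps_deriv_T_egf fps_add_nth fps_mult_left_const_nth T_eq_fact_mult_T_egf_nth
    by (simp add: algebra_simps)
  also have "fact n * (E_fps a g * T_egf (Suc lam) x a b (b - a)) $ n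
      = (\<Sum>s=0..n. of_nat (n choose s) * gfall g a s * T (Suc lam) x a b (b - a) (n - s))"
    by (simp only: fact_mult_fps_mult_nth fact_mult_E_fps_nth T_eq_fact_mult_T_egf_nth)
  finally show ?thesis .
qed

theorem theorem7:
  fixes \<alpha> \<beta> \<gamma> lam x n :: nat
  assumes "(\<alpha>, \<beta>, \<gamma>, lam, x) \<noteq> (0, 0, 0, 0, 0)"
  shows "T lam (of_nat x) (of_nat \<alpha>) (of_nat \<beta>) (of_nat \<gamma>) (Suc n) =
    of_nat \<gamma> * T lam (of_nat x) (of_nat \<alpha>) (of_nat \<beta>) (of_nat \<gamma> - of_nat \<alpha>) n
    + of_nat x * of_nat lam * of_nat \<beta> *
      (\<Sum>s=0..n. of_nat (n choose s) * gfall (of_nat \<gamma>) (of_nat \<alpha>) s *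
         T (Suc lam) (of_nat x) (of_nat \<alpha>) (of_nat \<beta>) (of_nat \<beta> - of_nat \<alpha>) (n - s))"
  by (rule T_Suc)

end
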